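(* Let $\theta^{\circ}_1,\dots,\theta^{\circ}_m\in\mathbb{S}^{d-1}$ be pairwise orthogonal, let $a,b$ be as below, and for $x\in\mathbb{S}^{d-1}$ define $$q(x)=ad\sum_{j=1}^m\sigma(\langle\theta^{\circ}_j,x\rangle)+bd\sum_{j_1=1}^m\sum_{j_2=1}^m\langle\theta^{\circ}_{j_1},x\rangle\mathbb{1}\{\langle\theta^{\circ}_{j_2},x\rangle\ge0\}$$ (equivalently $q(x)=(x^\top\mathbb{1}\{\langle\theta^{\circ}_1,x\rangle\ge0\},\dots,x^\top\mathbb{1}\{\langle\theta^{\circ}_m,x\rangle\ge0\})\,\big(\mathbb{E}[\tfrac1nX_0X_0^\top]\big)^{-1}(\theta^{\circ}_1;\dots;\theta^{\circ}_m)$). Then $0\le q(x)\le(a-bm)d\sqrt m$ for every $x\in\mathbb{S}^{d-1}$.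
   Context: $\sigma(u)=\max\{u,0\}$; $a=\frac{2\pi(\pi m+\pi+2)}{D}$, $b=-\frac{2\pi^2}{D}$ with $D=2\pi m^2+(\pi^2-2\pi+4)m+\pi^2+4\pi-4$. $X_0\in\mathbb{R}^{md\times n}$ has $i$-th column $(x_i\mathbb{1}\{\langle\theta^{\circ}_1,x_i\rangle\ge0\};\dots;x_i\mathbb{1}\{\langle\theta^{\circ}_m,x_i\rangle\ge0\})$ with $x_i$ i.i.d. uniform on $\mathbb{S}^{d-1}$. *)

theory Defs
  imports "HOL-Analysis.Analysis"
begin

definition relu :: "real \<Rightarrow> real" where
  "relu u = max u 0"

definition coefD :: "nat \<Rightarrow> real" where
  "coefD m = 2 * pi * (real m)^2 + (pi^2 - 2 * pi + 4) * real m + pi^2 + 4 * pi - 4"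

definition coefA :: "nat \<Rightarrow> real" where
  "coefA m = 2 * pi * (pi * real m + pi + 2) / coefD m"

definition coefB :: "nat \<Rightarrow> real" where
  "coefB m = - (2 * pi^2) / coefD m"

definition qfun :: "nat \<Rightarrow> (nat \<Rightarrow> real^'d) \<Rightarrow> real^'d \<Rightarrow> real" where
  "qfun m \<theta> x =
     coefA m * real CARD('d) * (\<Sum>j\<in>{1..m}. relu (\<theta> j \<bullet> x))
   + coefB m * real CARD('d) * (\<Sum>j1\<in>{1..m}. \<Sum>j2\<in>{1..m}.
        (\<theta> j1 \<bullet> x) * (if \<theta> j2 \<bullet> x \<ge> 0 then 1 else 0))"

end

theory Submission
  imports Defs
begin

text \<open>Write \<open>t\<^sub>j = \<langle>\<theta>\<^sub>j, x\<rangle>\<close>, \<open>P = \<Sum> \<sigma>(t\<^sub>j)\<close>, \<open>N = \<Sum> \<sigma>(-t\<^sub>j)\<close> and let \<open>k\<close> be the number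
  of indices with \<open>t\<^sub>j \<ge> 0\<close>. Then \<open>q(x) = d (a P + b k (P - N))\<close>. Since \<open>b \<le> 0 \<le> a + b m\<close>
  and \<open>0 \<le> k \<le> m\<close>, this is squeezed between \<open>0\<close> and \<open>d (a - b m)(P + N)\<close>, and
  \<open>P + N = \<Sum> |t\<^sub>j| \<le> \<surd>m\<close> by Cauchy-Schwarz and Bessel's inequality.\<close>

lemma coefD_pos: "0 < coefD m"
proof -
  have "pi\<^sup>2 - 2 * pi + 4 = (pi - 1)\<^sup>2 + 3"
    by (simp add: power2_eq_square algebra_simps)
  then have "0 < pi\<^sup>2 - 2 * pi + 4"
    by (smt (verit) zero_le_power2)
  moreover have "0 < pi\<^sup>2 + 4 * pi - 4"
    using pi_gt3 by (smt (verit) zero_le_power2)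
  ultimately show ?thesis
    unfolding coefD_def by (smt (verit) mult_nonneg_nonneg of_nat_0_le_iff zero_le_power2 pi_gt_zero)
qed

lemma coefA_nonneg: "0 \<le> coefA m"
  unfolding coefA_def using coefD_pos[of m] pi_gt_zero by (intro divide_nonneg_pos) auto

lemma coefB_nonpos: "coefB m \<le> 0"
  unfolding coefB_def using coefD_pos[of m] by (simp add: divide_nonpos_pos)

lemma coefA_add_coefB: "coefA m + coefB m * real m = 2 * pi * (pi + 2) / coefD m"
  unfolding coefA_def coefB_def using coefD_pos[of m]
  by (simp add: field_simps power2_eq_square)

lemma coefA_add_coefB_nonneg: "0 \<le> coefA m + coefB m * real m"
  unfolding coefA_add_coefB using coefD_pos[of m] pi_gt_zero by simp

lemma bessel_inequality:
  fixes e :: "'i \<Rightarrow> 'a::real_inner"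
  assumes "finite I"
    and "\<And>i j. i \<in> I \<Longrightarrow> j \<in> I \<Longrightarrow> e i \<bullet> e j = (if i = j then 1 else 0)"
  shows "(\<Sum>i\<in>I. (e i \<bullet> x)\<^sup>2) \<le> (norm x)\<^sup>2"
proof -
  define y where "y = (\<Sum>i\<in>I. (e i \<bullet> x) *\<^sub>R e i)"
  have yx: "y \<bullet> x = (\<Sum>i\<in>I. (e i \<bullet> x)\<^sup>2)"
    unfolding y_def by (simp add: inner_sum_left power2_eq_square)
  have "y \<bullet> y = (\<Sum>i\<in>I. \<Sum>j\<in>I. (e i \<bullet> x) * (e j \<bullet> x) * (e i \<bullet> e j))"
    unfolding y_def by (simp add: inner_sum_left inner_sum_right sum_distrib_left ac_simps)
      (intro sum.cong refl, simp add: inner_commute)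
  also have "\<dots> = (\<Sum>i\<in>I. \<Sum>j\<in>I. if i = j then (e i \<bullet> x) * (e j \<bullet> x) else 0)"
    using assms(2) by (intro sum.cong refl) simp
  also have "\<dots> = (\<Sum>i\<in>I. (e i \<bullet> x)\<^sup>2)"
    using assms(1) by (simp add: power2_eq_square)
  finally have yy: "y \<bullet> y = (\<Sum>i\<in>I. (e i \<bullet> x)\<^sup>2)" .
  have "0 \<le> (x - y) \<bullet> (x - y)"
    by simp
  also have "\<dots> = x \<bullet> x - 2 * (y \<bullet> x) + y \<bullet> y"
    by (simp add: inner_diff_left inner_diff_right inner_commute)
  finally show ?thesis
    unfolding power2_norm_eq_inner using yx yy by simp
qed

lemma sum_abs_le_sqrt_card:
  fixes t :: "'i \<Rightarrow> real"
  assumes "(\<Sum>i\<in>I. (t i)\<^sup>2) \<le> 1"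
  shows "(\<Sum>i\<in>I. \<bar>t i\<bar>) \<le> sqrt (card I)"
proof -
  have "(\<Sum>i\<in>I. \<bar>t i\<bar>)\<^sup>2 \<le> (\<Sum>i\<in>I. \<bar>t i\<bar>\<^sup>2) * card I"
    by (rule sum_squared_le_sum_of_squares)
  also have "\<dots> \<le> card I"
    using mult_right_mono[OF assms, of "card I"] by simp
  finally show ?thesis
    by (simp add: real_le_rsqrt)
qed

lemma relu_sum_bounds:
  fixes t :: "'i \<Rightarrow> real" and a b :: real
  assumes "finite I" and "0 \<le> a" and "b \<le> 0" and "0 \<le> a + b * card I"
  defines "k \<equiv> real (card {i\<in>I. 0 \<le> t i})"
  shows "0 \<le> a * (\<Sum>i\<in>I. relu (t i)) + b * (\<Sum>i\<in>I. t i) * k"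
    and "a * (\<Sum>i\<in>I. relu (t i)) + b * (\<Sum>i\<in>I. t i) * k \<le> (a - b * card I) * (\<Sum>i\<in>I. \<bar>t i\<bar>)"
proof -
  define P where "P = (\<Sum>i\<in>I. relu (t i))"
  define N where "N = (\<Sum>i\<in>I. relu (- t i))"
  have "0 \<le> P" "0 \<le> N"
    unfolding P_def N_def relu_def by (auto intro: sum_nonneg)
  have sum_t: "(\<Sum>i\<in>I. t i) = P - N"
    unfolding P_def N_def sum_subtractf[symmetric] by (rule sum.cong) (auto simp: relu_def)
  have sum_abs: "(\<Sum>i\<in>I. \<bar>t i\<bar>) = P + N"
    unfolding P_def N_def sum.distrib[symmetric] by (rule sum.cong) (auto simp: relu_def)
  have "0 \<le> k" "k \<le> card I"
    unfolding k_def using \<open>finite I\<close> by (auto intro: card_mono)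
  then have "b * card I \<le> b * k" "0 \<le> - b * k" "0 \<le> - b * card I"
    using \<open>b \<le> 0\<close> by (auto simp: mult_left_mono_neg mult_nonpos_nonneg)
  have split: "a * P + b * (P - N) * k = (a + b * k) * P + (- b * k) * N"
    by (simp add: algebra_simps)
  have "0 \<le> (a + b * k) * P" "0 \<le> (- b * k) * N"
    using \<open>0 \<le> P\<close> \<open>0 \<le> N\<close> \<open>0 \<le> - b * k\<close> \<open>b * card I \<le> b * k\<close> \<open>0 \<le> a + b * card I\<close>
    by (simp_all add: mult_nonpos_nonneg)
  then show "0 \<le> a * (\<Sum>i\<in>I. relu (t i)) + b * (\<Sum>i\<in>I. t i) * k"
    unfolding sum_t P_def[symmetric] split by simp
  have "(a + b * k) * P \<le> (a - b * card I) * P"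
    using \<open>0 \<le> P\<close> \<open>0 \<le> - b * k\<close> \<open>0 \<le> - b * card I\<close> by (intro mult_right_mono) auto
  moreover have "(- b * k) * N \<le> (a - b * card I) * N"
    using \<open>0 \<le> N\<close> \<open>0 \<le> a\<close> \<open>b * card I \<le> b * k\<close> by (intro mult_right_mono) auto
  ultimately show "a * (\<Sum>i\<in>I. relu (t i)) + b * (\<Sum>i\<in>I. t i) * k \<le> (a - b * card I) * (\<Sum>i\<in>I. \<bar>t i\<bar>)"
    unfolding sum_t sum_abs P_def[symmetric] split by (simp add: distrib_left)
qed

lemma qfun_eq:
  "qfun m \<theta> x = real CARD('d) * (coefA m * (\<Sum>j\<in>{1..m}. relu (\<theta> j \<bullet> x))
     + coefB m * (\<Sum>j\<in>{1..m}. \<theta> j \<bullet> x) * real (card {j\<in>{1..m}. 0 \<le> \<theta> j \<bullet> x}))"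
  for \<theta> :: "nat \<Rightarrow> real^'d"
proof -
  have "(\<Sum>j\<in>{1..m}. if 0 \<le> \<theta> j \<bullet> x then 1 else 0 :: real) = card {j\<in>{1..m}. 0 \<le> \<theta> j \<bullet> x}"
    by (simp add: sum.If_cases Int_def conj_commute)
  then show ?thesis
    unfolding qfun_def by (simp add: sum_product[symmetric] algebra_simps)
qed

theorem mainTheorem6:
  fixes m :: nat and \<theta> :: "nat \<Rightarrow> real^'d" and x :: "real^'d"
  assumes unit: "\<And>j. j \<in> {1..m} \<Longrightarrow> norm (\<theta> j) = 1"
    and orth: "\<And>j k. j \<in> {1..m} \<Longrightarrow> k \<in> {1..m} \<Longrightarrow> j \<noteq> k \<Longrightarrow> \<theta> j \<bullet> \<theta> k = 0"
    and xunit: "norm x = 1"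
  shows "0 \<le> qfun m \<theta> x \<and>
         qfun m \<theta> x \<le> (coefA m - coefB m * real m) * real CARD('d) * sqrt (real m)"
proof -
  have "(\<Sum>j\<in>{1..m}. (\<theta> j \<bullet> x)\<^sup>2) \<le> 1"
    using bessel_inequality[of "{1..m}" \<theta> x] unit orth xunit by (simp add: dot_square_norm)
  then have abs_sum: "(\<Sum>j\<in>{1..m}. \<bar>\<theta> j \<bullet> x\<bar>) \<le> sqrt m"
    using sum_abs_le_sqrt_card by fastforce
  note bounds = relu_sum_bounds[of "{1..m}" "coefA m" "coefB m" "\<lambda>j. \<theta> j \<bullet> x",
      OF _ coefA_nonneg coefB_nonpos, simplified, OF coefA_add_coefB_nonneg]
  have "coefB m * m \<le> 0"
    using coefB_nonpos by (simp add: mult_nonpos_nonneg)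
  then have "(coefA m - coefB m * m) * (\<Sum>j\<in>{1..m}. \<bar>\<theta> j \<bullet> x\<bar>) \<le> (coefA m - coefB m * m) * sqrt m"
    using abs_sum coefA_nonneg[of m] by (intro mult_left_mono) auto
  with bounds show ?thesis
    unfolding qfun_eq by (auto simp: mult.assoc mult.left_commute[of "real CARD('d)"] mult_left_mono)
qed

end
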